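(* Let $0<x_1<x_2<x_3$ and $y_3>0$ with $y_3<1/x_2$, $x_3y_3<1$ and $x_1x_2\ge 1/\sqrt2$. Put $q_2=(x_2,1/x_2)$, $q_3=(x_3,y_3)$, $u:=(x_3-x_2)\,y_3$, and suppose $$1+\frac{x_2-x_1}{x_2}+u\ \ge\ 2.$$ Then $0<u<1$, and $x':=\dfrac{x_2}{1-u}$ satisfies $x'>x_2$, $\dfrac{x'-x_2}{x'}=u$, and $$T_h(x_2,x')\ \le\ T(q_2,q_3).$$
   Context: For points $p=(x_p,y_p)$ and $q=(x_q,y_q)$ in $(0,\infty)^2$ define $T(p,q):=\tfrac12\,(y_p-y_q+x_q-x_p)\,(x_p+y_q)$, and for $a,b>0$ define $T_h(a,b):=T((a,1/a),(b,1/b))=\tfrac12\bigl(\tfrac1a-\tfrac1b+b-a\bigr)\bigl(a+\tfrac1b\bigr)$. (In the paper: a normalized tile consisting of a step $(q_1,q_2)$ between hyperbola points, $q_1=(x_1,1/x_1)$, and a "corner" $(q_2,q_3)$ with $q_3$ strictly below the hyperbola $xy=1$, of area at least $2$, can be replaced by a tile with two steps of the same area and no larger crown.) *)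

theory Defs
  imports Complex_Main
begin

definition T :: "real \<times> real \<Rightarrow> real \<times> real \<Rightarrow> real" where
  "T p q = (1/2) * (snd p - snd q + fst q - fst p) * (fst p + snd q)"

definition T_h :: "real \<Rightarrow> real \<Rightarrow> real" where
  "T_h a b = T (a, 1/a) (b, 1/b)"

end

theory Submission
  imports Defs
begin

text \<open>Write \<open>a = x\<^sub>2\<close> and \<open>x' = a / (1 - u)\<close>. Expanding the two areas, their difference
  factors as \<open>(1 - x\<^sub>3 y\<^sub>3) / 2\<close> times \<open>1 + (a y\<^sub>3 - u) / a\<^sup>2 + u a / (y\<^sub>3 (1 - u))\<close>.
  The first factor is positive because \<open>q\<^sub>3\<close> lies below the hyperbola. In the second,
  with \<open>p = u a\<^sup>2\<close>, the last summand is at least \<open>p\<close> and \<open>u / a\<^sup>2 = u\<^sup>2 / p < 1 / p\<close>;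
  the area hypothesis gives \<open>u \<ge> x\<^sub>1 / x\<^sub>2\<close>, hence \<open>p \<ge> x\<^sub>1 x\<^sub>2 \<ge> 1 / \<surd>2\<close>, and
  then \<open>1 / p < 1 + p\<close>.\<close>

lemma T_minus_T_h_eq:
  fixes a x y u :: real
  assumes "a > 0" "y > 0" "u \<noteq> 1" "u = (x - a) * y"
  shows "T (a, 1 / a) (x, y) - T_h a (a / (1 - u))
           = (1 - x * y) / 2 * (1 + (a * y - u) / a\<^sup>2 + u * a / (y * (1 - u)))"
proof -
  have x: "x = a + u / y" using assms(2,4) by (simp add: field_simps)
  have "1 - u \<noteq> 0" using assms(3) by simp
  then show ?thesis
    using assms(1,2) unfolding x T_h_def T_def by (simp add: field_simps power2_eq_square)
qed

lemma inverse_less_one_add: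
  fixes p :: real
  assumes "1 / sqrt 2 \<le> p"
  shows "1 / p < 1 + p"
proof -
  have "sqrt 2 < 2" using real_sqrt_less_iff[of 2 4] by simp
  then have "1 / 2 < 1 / sqrt 2" by (simp add: divide_strict_left_mono)
  then have "1 / 2 < p" using assms by linarith
  moreover have "1 / 2 \<le> p\<^sup>2"
    using power_mono[OF assms, of 2] by (simp add: power_divide)
  ultimately have "1 < p + p * p" by (simp add: power2_eq_square)
  with \<open>1 / 2 < p\<close> show ?thesis by (simp add: field_simps)
qed

lemma area_factor_pos:
  fixes a y u :: real
  assumes "a > 0" "y > 0" "a * y < 1" "0 < u" "u < 1" "1 / sqrt 2 \<le> u * a\<^sup>2"
  shows "0 < 1 + (a * y - u) / a\<^sup>2 + u * a / (y * (1 - u))"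
proof -
  define p where "p = u * a\<^sup>2"
  have p0: "p > 0" using assms p_def by simp
  have "u / a\<^sup>2 = u\<^sup>2 / p" using assms p_def by (simp add: field_simps power2_eq_square)
  also have "\<dots> < 1 / p" using assms p0 by (simp add: divide_strict_right_mono power_less_one_iff)
  also have "\<dots> < 1 + p" using inverse_less_one_add assms(6) p_def by simp
  finally have u_bound: "u / a\<^sup>2 < 1 + p" .
  have "a * y * (1 - u) \<le> 1"
    using assms mult_le_one[of "a * y" "1 - u"] by simp
  then have "p \<le> p / (a * y * (1 - u))"
    using assms p0 by (simp add: le_divide_eq)
  also have "\<dots> = u * a / (y * (1 - u))"
    using assms p_def by (simp add: field_simps power2_eq_square)
  finally have "p \<le> u * a / (y * (1 - u))" .
  moreover have "0 \<le> a * y / a\<^sup>2" using assms by simp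
  ultimately show ?thesis using u_bound by (simp add: diff_divide_distrib)
qed

lemma step_abscissa:
  fixes a u :: real
  assumes "a > 0" "0 < u" "u < 1"
  shows "a / (1 - u) > a" "(a / (1 - u) - a) / (a / (1 - u)) = u"
  using assms by (simp_all add: field_simps)

theorem mainTheorem7:
  fixes x1 x2 x3 y3 :: real
  assumes "0 < x1" "x1 < x2" "x2 < x3"
    and "y3 > 0" "y3 < 1 / x2" "x3 * y3 < 1"
    and "x1 * x2 \<ge> 1 / sqrt 2"
    and "1 + (x2 - x1) / x2 + (x3 - x2) * y3 \<ge> 2"
  shows "0 < (x3 - x2) * y3 \<and> (x3 - x2) * y3 < 1 \<and>
         (let u = (x3 - x2) * y3; x' = x2 / (1 - u) in
            x' > x2 \<and> (x' - x2) / x' = u \<and>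
            T_h x2 x' \<le> T (x2, 1 / x2) (x3, y3))"
proof -
  define u where "u = (x3 - x2) * y3"
  have x2: "x2 > 0" and y: "x2 * y3 < 1" using assms by (simp_all add: field_simps)
  have u0: "0 < u" using assms u_def by simp
  have "0 < x2 * y3" using x2 assms(4) by simp
  moreover have "u = x3 * y3 - x2 * y3" using u_def by (simp add: algebra_simps)
  ultimately have u1: "u < 1" using assms(6) by linarith
  have "(x2 - x1) / x2 = 1 - x1 / x2" using x2 by (simp add: field_simps)
  then have "x1 / x2 \<le> u" using assms(8) u_def by linarith
  then have "x1 * x2 \<le> u * x2\<^sup>2" using x2 by (simp add: field_simps power2_eq_square)
  then have "0 < 1 + (x2 * y3 - u) / x2\<^sup>2 + u * x2 / (y3 * (1 - u))"
    using area_factor_pos[OF x2 assms(4) y u0 u1] assms(7) by linarith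
  then have "0 \<le> (1 - x3 * y3) / 2 * (1 + (x2 * y3 - u) / x2\<^sup>2 + u * x2 / (y3 * (1 - u)))"
    using assms(6) by (intro mult_nonneg_nonneg) auto
  moreover have "u \<noteq> 1" using u1 by simp
  ultimately have "T_h x2 (x2 / (1 - u)) \<le> T (x2, 1 / x2) (x3, y3)"
    using T_minus_T_h_eq[OF x2 assms(4) _ u_def] by linarith
  then show ?thesis
    using step_abscissa[OF x2 u0 u1] u0 u1 unfolding Let_def u_def by blast
qed

end
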